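(* Let $P$ be a weighted combinatorial optimization problem, let $A$ be a deterministic algorithm for $P$ that uses symbolic perturbation, and let $\mathcal{C}$ be any null case of $P$. (d) If for every instance $(S,w) \notin \mathcal{C}$ the algorithm returns $A(S,w) \in L$ with $\mathrm{cost}(w,A(S,w)) = \mathrm{OPT}(S,w)$, then the same holds for every instance $(S,w)$. (e) For each $S=(n,W,L,\mathrm{cost}) \in P$, let $c(S,\cdot) : W \to \mathbb{R}$ be continuous. Suppose that for every instance $(S,w) \notin \mathcal{C}$ the algorithm returns $A(S,w) \in L$ with $\mathrm{cost}(w,A(S,w)) \le c(S,w)\cdot \mathrm{OPT}(S,w)$. Then the same holds for every instance $(S,w)$.
   Context: Let $Q$ be a subfield of $\mathbb{R}$ (e.g. $\mathbb{R}$, $\mathbb{Q}$, or the real algebraic numbers). Equip $Q^n$ with the Euclidean metric $d$. For $x \in Q^n$ and $\epsilon>0$, the $\epsilon$-neighborhood of $x$ is $\{y \in Q^n \mid d(x,y)<\epsilon\}$. A neighborhood of $x$ is an $\epsilon$-neighborhood of $x$ for some $\epsilon>0$. A set $U \subseteq Q^n$ is open if it contains a neighborhood of each of its points. A set $C \subseteq Q^n$ is nowhere open if it contains no non-empty open subset of $Q^n$. A set $X \subseteq Q^n$ is semi-open if for every $x \in X$ and every neighborhood $N$ of $x$ there is a non-empty open set $U \subseteq Q^n$ with $U \subseteq N \cap X$. For $x \in \mathbb{R}$, $\mathrm{sgn}(x) = x/|x|$ if $x \neq 0$ and $\mathrm{sgn}(0)=0$. Problems: A weighted combinatorial optimization (minimization)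 problem $P$ is a set of problem structures; each structure $S=(n,W,L,\mathrm{cost})$ consists of a positive integer $n$, a semi-open set $W \subseteq Q^n$ of admissible weight vectors, a finite non-empty set $L$ of feasible solutions, and a function $\mathrm{cost} : W \times L \to \mathbb{R}$ such that $\mathrm{cost}(\cdot,l)$ is continuous on $W$ for every $l \in L$. An instance is a pair $(S,w)$ with $S \in P$ and $w \in W$, and $\mathrm{OPT}(S,w)=\min_{l\in L}\mathrm{cost}(w,l)$. A null case of $P$ is a set $\mathcal{C}$ of instances of $P$ such that for every structure $S=(n,W,L,\mathrm{cost}) \in P$ the set $\{w \in W \mid (S,w) \in \mathcal{C}\}$ is nowhere open. Algorithms: A deterministic algorithm $A$ for $P$ assigns to each structure $S=(n,W,L,\mathrm{cost}) \in P$ a finite rooted binary decision tree $T_S$. Each leaf is labelled with an element of $L \cup \{l_f\}$, where $l_f \notin L$ is a special symbol representing failure. Each internal node $u$ is labelled with a continuous branching function $v_u : W \to Q$. On input $(S,w)$, $A$ starts at the root of $T_S$. At an internal node $u$ it moves to the left child if $v_u(w)<0$ and to the right child if $v_u(w)>0$. If $v_u(w)=0$ (a tie), it moves to the left or right child according to a deterministic tie-breaking policy, i.e. a rule fixing, for every instance $(S,w)$ and every internal node $u$ with $v_u(w)=0$, which child is taken. $A$ returns the label $A(S,w)$ of the leaf reached. Directions: Let $W \subseteq Q^n$ be semi-open, $w \in W$, and $h : \mathbb{R} \to Q^n$ with $h(0)=0$ and $h$ continuous at $0$. $W$ continues into direction $h$ at $w$ if there is $\delta>0$ such that for every $0<a<\delta$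 some neighborhood of $w+h(a)$ is contained in $W$. If $W$ continues into direction $h$ at $w$ and $f : W \to Q$ is continuous, then $f$ is increasing (resp. constant, decreasing) into direction $h$ at $w$ if the following holds: there is $\delta>0$ such that for every $0<a<\delta$ there is a neighborhood $N_a \subseteq W$ of $w+h(a)$ with $\mathrm{sgn}(f(y)-f(w)) = 1$ (resp. $0$, $-1$) for all $y \in N_a$. Symbolic perturbation: $A$ uses symbolic perturbation if, for every instance $(S,w)$ with $S=(n,W,L,\mathrm{cost})$, there exists a function $h_{S,w} : \mathbb{R} \to Q^n$ satisfying all of the following: - $h_{S,w}(0)=0$ and $h_{S,w}$ is continuous at $0$; - $W$ continues into direction $h_{S,w}$ at $w$; - every branching function of $T_S$ is decreasing, constant, or increasing into direction $h_{S,w}$ at $w$; - whenever a tie $v_u(w)=0$ occurs at an internal node $u$ on input $(S,w)$, $A$ takes the left child if $v_u$ is decreasing into direction $h_{S,w}$ at $w$, and the right child otherwise. *)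

theory Defs
  imports Complex_Main
begin

text \<open>Points of Q^n are represented as functions nat => real that take values in Q
  on the indices 0..n-1 and vanish on all other indices.\<close>

type_synonym vec = "nat \<Rightarrow> real"

definition is_subfield :: "real set \<Rightarrow> bool" where
  "is_subfield Q \<longleftrightarrow> 0 \<in> Q \<and> 1 \<in> Q \<and>
     (\<forall>x\<in>Q. \<forall>y\<in>Q. x + y \<in> Q \<and> x * y \<in> Q) \<and> (\<forall>x\<in>Q. - x \<in> Q) \<and>
     (\<forall>x\<in>Q. x \<noteq> 0 \<longrightarrow> inverse x \<in> Q)"

definition Qn :: "real set \<Rightarrow> nat \<Rightarrow> vec set" where
  "Qn Q n = {x. (\<forall>i<n. x i \<in> Q) \<and> (\<forall>i\<ge>n. x i = 0)}"

definition distn :: "nat \<Rightarrow> vec \<Rightarrow> vec \<Rightarrow> real" where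
  "distn n x y = sqrt (\<Sum>i<n. (x i - y i)^2)"

definition nbhd :: "real set \<Rightarrow> nat \<Rightarrow> vec \<Rightarrow> real \<Rightarrow> vec set" where
  "nbhd Q n x e = {y \<in> Qn Q n. distn n x y < e}"

definition openQ :: "real set \<Rightarrow> nat \<Rightarrow> vec set \<Rightarrow> bool" where
  "openQ Q n U \<longleftrightarrow> U \<subseteq> Qn Q n \<and> (\<forall>x\<in>U. \<exists>e>0. nbhd Q n x e \<subseteq> U)"

definition nowhere_open :: "real set \<Rightarrow> nat \<Rightarrow> vec set \<Rightarrow> bool" where
  "nowhere_open Q n C \<longleftrightarrow> \<not> (\<exists>U. U \<noteq> {} \<and> openQ Q n U \<and> U \<subseteq> C)"

definition semi_open :: "real set \<Rightarrow> nat \<Rightarrow> vec set \<Rightarrow> bool" where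
  "semi_open Q n X \<longleftrightarrow> X \<subseteq> Qn Q n \<and>
     (\<forall>x\<in>X. \<forall>e>0. \<exists>U. U \<noteq> {} \<and> openQ Q n U \<and> U \<subseteq> nbhd Q n x e \<inter> X)"

definition contQ :: "nat \<Rightarrow> vec set \<Rightarrow> (vec \<Rightarrow> real) \<Rightarrow> bool" where
  "contQ n W f \<longleftrightarrow> (\<forall>x\<in>W. \<forall>e>0. \<exists>d>0. \<forall>y\<in>W. distn n x y < d \<longrightarrow> \<bar>f y - f x\<bar> < e)"

text \<open>Problem structures S = (n, W, L, cost); the failure symbol is None.\<close>
type_synonym 'l struct = "nat \<times> vec set \<times> 'l set \<times> (vec \<Rightarrow> 'l \<Rightarrow> real)"

definition valid_struct :: "real set \<Rightarrow> 'l struct \<Rightarrow> bool" where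
  "valid_struct Q S = (case S of (n, W, L, cost) \<Rightarrow>
     n > 0 \<and> semi_open Q n W \<and> finite L \<and> L \<noteq> {} \<and> (\<forall>l\<in>L. contQ n W (\<lambda>w. cost w l)))"

definition is_problem :: "real set \<Rightarrow> 'l struct set \<Rightarrow> bool" where
  "is_problem Q P \<longleftrightarrow> (\<forall>S\<in>P. valid_struct Q S)"

definition OPT :: "'l struct \<Rightarrow> vec \<Rightarrow> real" where
  "OPT S w = (case S of (n, W, L, cost) \<Rightarrow> Min ((\<lambda>l. cost w l) ` L))"

definition null_case :: "real set \<Rightarrow> 'l struct set \<Rightarrow> ('l struct \<times> vec) set \<Rightarrow> bool" where
  "null_case Q P C \<longleftrightarrow>
     (\<forall>(S, w)\<in>C. S \<in> P \<and> w \<in> fst (snd S)) \<and>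
     (\<forall>S\<in>P. case S of (n, W, L, cost) \<Rightarrow> nowhere_open Q n {w \<in> W. (S, w) \<in> C})"

datatype 'l dtree = Leaf "'l option" | Node "vec \<Rightarrow> real" "'l dtree" "'l dtree"

fun branch_fns :: "'l dtree \<Rightarrow> (vec \<Rightarrow> real) set" where
  "branch_fns (Leaf x) = {}"
| "branch_fns (Node v l r) = insert v (branch_fns l \<union> branch_fns r)"

fun leaf_labels :: "'l dtree \<Rightarrow> 'l set" where
  "leaf_labels (Leaf x) = set_option x"
| "leaf_labels (Node v l r) = leaf_labels l \<union> leaf_labels r"

text \<open>Nodes are identified by their path from the root (False = left, True = right).
  The tie-breaking policy for a fixed instance is a map tb from nodes to bool,
  True meaning "go left" when a tie occurs at that node.\<close>
fun run :: "(bool list \<Rightarrow> bool) \<Rightarrow> vec \<Rightarrow> bool list \<Rightarrow> 'l dtree \<Rightarrow> 'l option" where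
  "run tb w p (Leaf x) = x"
| "run tb w p (Node v l r) =
     (if v w < 0 then run tb w (p @ [False]) l
      else if v w > 0 then run tb w (p @ [True]) r
      else if tb p then run tb w (p @ [False]) l else run tb w (p @ [True]) r)"

fun ties_ok :: "(bool list \<Rightarrow> bool) \<Rightarrow> ((vec \<Rightarrow> real) \<Rightarrow> bool) \<Rightarrow> vec \<Rightarrow> bool list \<Rightarrow> 'l dtree \<Rightarrow> bool" where
  "ties_ok tb dec w p (Leaf x) = True"
| "ties_ok tb dec w p (Node v l r) =
     (if v w < 0 then ties_ok tb dec w (p @ [False]) l
      else if v w > 0 then ties_ok tb dec w (p @ [True]) r
      else (tb p = dec v) \<and>
           (if tb p then ties_ok tb dec w (p @ [False]) l else ties_ok tb dec w (p @ [True]) r))"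

text \<open>A deterministic algorithm: a tree T S for each structure, and a tie-breaking policy tb.\<close>
definition is_algorithm :: "real set \<Rightarrow> 'l struct set \<Rightarrow> ('l struct \<Rightarrow> 'l dtree) \<Rightarrow> bool" where
  "is_algorithm Q P T \<longleftrightarrow> (\<forall>S\<in>P. case S of (n, W, L, cost) \<Rightarrow>
      leaf_labels (T S) \<subseteq> L \<and>
      (\<forall>v\<in>branch_fns (T S). contQ n W v \<and> v ` W \<subseteq> Q))"

definition alg_out :: "('l struct \<Rightarrow> 'l dtree) \<Rightarrow> ('l struct \<Rightarrow> vec \<Rightarrow> bool list \<Rightarrow> bool)
    \<Rightarrow> 'l struct \<Rightarrow> vec \<Rightarrow> 'l option" where
  "alg_out T tb S w = run (tb S w) w [] (T S)"

definition continues_into :: "real set \<Rightarrow> nat \<Rightarrow> vec set \<Rightarrow> (real \<Rightarrow> vec) \<Rightarrow> vec \<Rightarrow> bool" where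
  "continues_into Q n W h w \<longleftrightarrow>
     (\<exists>d>0. \<forall>a. 0 < a \<and> a < d \<longrightarrow> (\<exists>e>0. nbhd Q n (\<lambda>i. w i + h a i) e \<subseteq> W))"

definition dir_behaviour :: "real set \<Rightarrow> nat \<Rightarrow> vec set \<Rightarrow> (real \<Rightarrow> vec) \<Rightarrow> vec \<Rightarrow> (vec \<Rightarrow> real) \<Rightarrow> real \<Rightarrow> bool" where
  "dir_behaviour Q n W h w f s \<longleftrightarrow>
     (\<exists>d>0. \<forall>a. 0 < a \<and> a < d \<longrightarrow>
        (\<exists>e>0. nbhd Q n (\<lambda>i. w i + h a i) e \<subseteq> W \<and> (\<forall>y\<in>nbhd Q n (\<lambda>i. w i + h a i) e. sgn (f y - f w) = s)))"

definition is_direction :: "real set \<Rightarrow> nat \<Rightarrow> (real \<Rightarrow> vec) \<Rightarrow> bool" where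
  "is_direction Q n h \<longleftrightarrow> (\<forall>a. h a \<in> Qn Q n) \<and> h 0 = (\<lambda>i. 0) \<and>
     (\<forall>e>0. \<exists>d>0. \<forall>a. \<bar>a\<bar> < d \<longrightarrow> distn n (h a) (\<lambda>i. 0) < e)"

definition uses_symbolic_perturbation :: "real set \<Rightarrow> 'l struct set \<Rightarrow> ('l struct \<Rightarrow> 'l dtree)
    \<Rightarrow> ('l struct \<Rightarrow> vec \<Rightarrow> bool list \<Rightarrow> bool) \<Rightarrow> bool" where
  "uses_symbolic_perturbation Q P T tb \<longleftrightarrow> (\<forall>S\<in>P. case S of (n, W, L, cost) \<Rightarrow>
     (\<forall>w\<in>W. \<exists>h. is_direction Q n h \<and> continues_into Q n W h w \<and>
        (\<forall>v\<in>branch_fns (T S). dir_behaviour Q n W h w v (-1) \<or> dir_behaviour Q n W h w v 0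
                                \<or> dir_behaviour Q n W h w v 1) \<and>
        ties_ok (tb S w) (\<lambda>v. dir_behaviour Q n W h w v (-1)) w [] (T S)))"

end

theory Submission
  imports Defs "HOL-Analysis.L2_Norm"
begin

(* Fix a structure S = (n, W, L, cost) and an admissible weight vector w.
   Symbolic perturbation provides a direction h such that every branching function v of the
   decision tree has a definite sign behaviour s_v (decreasing, constant, increasing) along h.
   Hence for small a > 0 there is a whole open neighbourhood N of w + h(a), arbitrarily close
   to w and contained in W, on which sgn (v y - v w) = s_v for all v, and on which every v
   with v w ~= 0 keeps the sign of v w.  Since the null case is nowhere open, N contains an
   instance y outside the null case.  At y the decision tree takes exactly the branches it
   takes at w: strict signs are preserved, a tie at w with v decreasing becomes v y < 0, with v
   increasing becomes v y > 0, and with v constant v is constant near y, so v is not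
   decreasing at y and the tie at y is broken to the right, just as at w.  Thus the output at
   w is also the output along a sequence of non-null instances converging to w, and since
   cost, OPT and c are continuous, the equation cost = OPT (part d) and the inequality
   cost <= c * OPT (part e) pass to the limit. *)

lemma distn_triangle: "distn n x z \<le> distn n x y + distn n y z"
proof -
  have "distn n x z = L2_set (\<lambda>i. (x i - y i) + (y i - z i)) {..<n}"
    by (simp add: distn_def L2_set_def)
  also have "\<dots> \<le> L2_set (\<lambda>i. x i - y i) {..<n} + L2_set (\<lambda>i. y i - z i) {..<n}"
    by (rule L2_set_triangle_ineq)
  finally show ?thesis by (simp add: distn_def L2_set_def)
qed

lemma distn_shift: "distn n w (\<lambda>i. w i + h i) = distn n h (\<lambda>i. 0)"
  by (simp add: distn_def)

lemma distn_self [simp]: "distn n x x = 0"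
  by (simp add: distn_def)

lemma nbhd_inner:
  assumes "y \<in> nbhd Q n x e"
  shows "nbhd Q n y (e - distn n x y) \<subseteq> nbhd Q n x e" "e - distn n x y > 0"
proof -
  show "e - distn n x y > 0" using assms by (simp add: nbhd_def)
  show "nbhd Q n y (e - distn n x y) \<subseteq> nbhd Q n x e"
  proof
    fix z assume z: "z \<in> nbhd Q n y (e - distn n x y)"
    have "distn n x z \<le> distn n x y + distn n y z" by (rule distn_triangle)
    with z show "z \<in> nbhd Q n x e" by (auto simp: nbhd_def)
  qed
qed

lemma openQ_nbhd: "openQ Q n (nbhd Q n x e)"
  unfolding openQ_def using nbhd_inner by (fastforce simp: nbhd_def)

text \<open>The filter of neighbourhoods of a point of Q^n.  A property holds eventually in it iff it
  holds on some epsilon-neighbourhood; the filter lets us combine finitely many local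
  properties without juggling radii.\<close>

definition nbhds :: "real set \<Rightarrow> nat \<Rightarrow> vec \<Rightarrow> vec filter" where
  "nbhds Q n x = (INF e\<in>{0<..}. principal (nbhd Q n x e))"

lemma eventually_nbhds: "eventually P (nbhds Q n x) \<longleftrightarrow> (\<exists>e>0. \<forall>y\<in>nbhd Q n x e. P y)"
  unfolding nbhds_def
proof (subst eventually_INF_base)
  show "\<exists>c\<in>{0<..}. principal (nbhd Q n x c) \<le> inf (principal (nbhd Q n x a)) (principal (nbhd Q n x b))"
    if "a \<in> {0<..}" "b \<in> {0<..}" for a b :: real
    using that by (intro bexI[of _ "min a b"]) (auto simp: nbhd_def)
qed (auto simp: eventually_principal)

lemma eventually_nbhds_center: "eventually P (nbhds Q n x) \<Longrightarrow> x \<in> Qn Q n \<Longrightarrow> P x"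
  by (auto simp: eventually_nbhds nbhd_def)

lemma eventually_in_nbhd: "y \<in> nbhd Q n x e \<Longrightarrow> eventually (\<lambda>z. z \<in> nbhd Q n x e) (nbhds Q n y)"
  using nbhd_inner unfolding eventually_nbhds by blast

lemma eventually_nbhds_close: "r > 0 \<Longrightarrow> eventually (\<lambda>y. distn n x y < r) (nbhds Q n x)"
  unfolding eventually_nbhds nbhd_def by auto

lemma contQ_sgn_stable:
  assumes "contQ n W f" "x \<in> W" "f x \<noteq> 0"
  shows "eventually (\<lambda>y. y \<in> W \<longrightarrow> sgn (f y) = sgn (f x)) (nbhds Q n x)"
proof -
  obtain d where "d > 0" and d: "\<forall>y\<in>W. distn n x y < d \<longrightarrow> \<bar>f y - f x\<bar> < \<bar>f x\<bar>"
    using assms unfolding contQ_def by (meson zero_less_abs_iff)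
  then have "\<forall>y\<in>nbhd Q n x d. y \<in> W \<longrightarrow> sgn (f y) = sgn (f x)"
    by (fastforce simp: nbhd_def sgn_if abs_if split: if_splits)
  with \<open>d > 0\<close> show ?thesis unfolding eventually_nbhds by blast
qed

text \<open>A property holding near w also holds near w + h(a) for all small a > 0, because the
  direction h is continuous at 0 with h(0) = 0.\<close>

lemma eventually_nbhds_shift:
  assumes "is_direction Q n h" "eventually P (nbhds Q n w)"
  shows "eventually (\<lambda>a. eventually P (nbhds Q n (\<lambda>i. w i + h a i))) (at_right 0)"
proof -
  obtain e where "e > 0" and e: "\<forall>y\<in>nbhd Q n w e. P y"
    using assms(2) unfolding eventually_nbhds by blast
  then obtain d where "d > 0" and d: "\<forall>a. \<bar>a\<bar> < d \<longrightarrow> distn n (h a) (\<lambda>i. 0) < e / 2"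
    using assms(1) unfolding is_direction_def by (meson half_gt_zero)
  have "nbhd Q n (\<lambda>i. w i + h a i) (e / 2) \<subseteq> nbhd Q n w e" if "0 < a" "a < d" for a
  proof
    fix y assume y: "y \<in> nbhd Q n (\<lambda>i. w i + h a i) (e / 2)"
    have "distn n w (\<lambda>i. w i + h a i) < e / 2" using d that by (simp add: distn_shift)
    moreover have "distn n w y \<le> distn n w (\<lambda>i. w i + h a i) + distn n (\<lambda>i. w i + h a i) y"
      by (rule distn_triangle)
    ultimately show "y \<in> nbhd Q n w e" using y by (auto simp: nbhd_def)
  qed
  with e \<open>e > 0\<close> \<open>d > 0\<close> show ?thesis
    unfolding eventually_at_right_field eventually_nbhds
    by (intro exI[of _ d]) (meson half_gt_zero subsetD)
qed

lemma dir_behaviour_iff: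
  "dir_behaviour Q n W h w f s \<longleftrightarrow>
   eventually (\<lambda>a. eventually (\<lambda>y. y \<in> W \<and> sgn (f y - f w) = s) (nbhds Q n (\<lambda>i. w i + h a i))) (at_right 0)"
  unfolding dir_behaviour_def eventually_at_right_field eventually_nbhds
  by (simp add: subset_eq ball_conj_distrib imp_conjL)

lemma continues_into_iff:
  "continues_into Q n W h w \<longleftrightarrow>
   eventually (\<lambda>a. eventually (\<lambda>y. y \<in> W) (nbhds Q n (\<lambda>i. w i + h a i))) (at_right 0)"
  unfolding continues_into_def eventually_at_right_field eventually_nbhds
  by (simp add: subset_eq imp_conjL)

lemma shifted_point_in_Qn:
  assumes "is_subfield Q" "w \<in> Qn Q n" "is_direction Q n h"
  shows "(\<lambda>i. w i + h a i) \<in> Qn Q n"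
  using assms by (auto simp: Qn_def is_subfield_def is_direction_def)

lemma dir_behaviour_unique:
  assumes sf: "is_subfield Q" and w: "w \<in> Qn Q n" and h: "is_direction Q n h"
    and "dir_behaviour Q n W h w f s" "dir_behaviour Q n W h w f s'"
  shows "s = s'"
proof -
  have "eventually (\<lambda>a. eventually (\<lambda>y. sgn (f y - f w) = s \<and> sgn (f y - f w) = s')
          (nbhds Q n (\<lambda>i. w i + h a i))) (at_right 0)"
    using assms(4,5) unfolding dir_behaviour_iff by eventually_elim (auto elim: eventually_elim2)
  then obtain a where "eventually (\<lambda>y. sgn (f y - f w) = s \<and> sgn (f y - f w) = s')
          (nbhds Q n (\<lambda>i. w i + h a i))"
    using eventually_happens'[OF trivial_limit_at_right_real] by blast
  with shifted_point_in_Qn[OF sf w h] show ?thesis by (auto dest: eventually_nbhds_center)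
qed

lemma dir_behaviour_locally_constant:
  assumes sf: "is_subfield Q" and y: "y \<in> Qn Q n" and h: "is_direction Q n h"
    and const: "eventually (\<lambda>z. f z = f y) (nbhds Q n y)" and beh: "dir_behaviour Q n W h y f s"
  shows "s = 0"
proof -
  have "eventually (\<lambda>a. eventually (\<lambda>z. f z = f y \<and> sgn (f z - f y) = s)
          (nbhds Q n (\<lambda>i. y i + h a i))) (at_right 0)"
    using eventually_nbhds_shift[OF h const] beh unfolding dir_behaviour_iff
    by eventually_elim (auto elim: eventually_elim2)
  then obtain a where "eventually (\<lambda>z. f z = f y \<and> sgn (f z - f y) = s) (nbhds Q n (\<lambda>i. y i + h a i))"
    using eventually_happens'[OF trivial_limit_at_right_real] by blast
  with shifted_point_in_Qn[OF sf y h] show ?thesis by (auto dest: eventually_nbhds_center)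
qed

text \<open>Under ties_ok the run of a decision tree only depends on which branching functions are
  decreasing: at every node the left child is taken iff goes_left holds.\<close>

definition goes_left :: "((vec \<Rightarrow> real) \<Rightarrow> bool) \<Rightarrow> vec \<Rightarrow> (vec \<Rightarrow> real) \<Rightarrow> bool" where
  "goes_left dec w v \<longleftrightarrow> v w < 0 \<or> (v w = 0 \<and> dec v)"

fun run_dec :: "((vec \<Rightarrow> real) \<Rightarrow> bool) \<Rightarrow> vec \<Rightarrow> 'l dtree \<Rightarrow> 'l option" where
  "run_dec dec w (Leaf x) = x"
| "run_dec dec w (Node v l r) = (if goes_left dec w v then run_dec dec w l else run_dec dec w r)"

lemma run_eq_run_dec: "ties_ok tb dec w p t \<Longrightarrow> run tb w p t = run_dec dec w t"
  by (induction t arbitrary: p) (auto simp: goes_left_def)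

lemma run_dec_cong:
  "\<forall>v\<in>branch_fns t. goes_left dec w v = goes_left dec' y v \<Longrightarrow> run_dec dec w t = run_dec dec' y t"
  by (induction t) auto

lemma finite_branch_fns: "finite (branch_fns t)"
  by (induction t) auto

lemma same_decision:
  assumes sf: "is_subfield Q" and w: "w \<in> Qn Q n" and y: "y \<in> Qn Q n"
    and h: "is_direction Q n h" and hy: "is_direction Q n hy"
    and beh: "dir_behaviour Q n W h w v s"
    and sgn_y: "sgn (v y - v w) = s" and stable: "v w \<noteq> 0 \<Longrightarrow> sgn (v y) = sgn (v w)"
    and near_y: "eventually (\<lambda>z. sgn (v z - v w) = s) (nbhds Q n y)"
  shows "goes_left (\<lambda>u. dir_behaviour Q n W h w u (-1)) w v
       = goes_left (\<lambda>u. dir_behaviour Q n W hy y u (-1)) y v"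
proof (cases "v w = 0")
  case False
  then show ?thesis using stable by (auto simp: goes_left_def sgn_if split: if_splits)
next
  case True
  have dec_w: "dir_behaviour Q n W h w v (-1) \<longleftrightarrow> s = -1"
    using beh dir_behaviour_unique[OF sf w h] by metis
  consider "v y < 0" "s = -1" | "v y > 0" "s = 1" | "v y = 0" "s = 0"
    using sgn_y True by (auto simp: sgn_if split: if_splits)
  then show ?thesis
  proof cases
    case 3
    have "eventually (\<lambda>z. v z = v y) (nbhds Q n y)"
      using near_y True 3 by (auto elim: eventually_mono simp: sgn_if split: if_splits)
    then have "\<not> dir_behaviour Q n W hy y v (-1)"
      using dir_behaviour_locally_constant[OF sf y hy] by force
    then show ?thesis using 3 True dec_w by (simp add: goes_left_def)
  qed (use True dec_w in \<open>auto simp: goes_left_def\<close>)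
qed

lemma same_output:
  assumes sf: "is_subfield Q" and w: "w \<in> Qn Q n" and y: "y \<in> Qn Q n"
    and h: "is_direction Q n h" and hy: "is_direction Q n hy"
    and tw: "ties_ok tbw (\<lambda>u. dir_behaviour Q n W h w u (-1)) w [] t"
    and ty: "ties_ok tby (\<lambda>u. dir_behaviour Q n W hy y u (-1)) y [] t"
    and beh: "\<forall>v\<in>branch_fns t. dir_behaviour Q n W h w v (s v)"
    and at_y: "\<forall>v\<in>branch_fns t. sgn (v y - v w) = s v \<and> (v w \<noteq> 0 \<longrightarrow> sgn (v y) = sgn (v w))"
    and near_y: "eventually (\<lambda>z. \<forall>v\<in>branch_fns t. sgn (v z - v w) = s v) (nbhds Q n y)"
  shows "run tby y [] t = run tbw w [] t"
proof -
  have "goes_left (\<lambda>u. dir_behaviour Q n W hy y u (-1)) y v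
      = goes_left (\<lambda>u. dir_behaviour Q n W h w u (-1)) w v" if "v \<in> branch_fns t" for v
  proof (rule same_decision[OF sf w y h hy, symmetric])
    show "eventually (\<lambda>z. sgn (v z - v w) = s v) (nbhds Q n y)"
      using near_y by (rule eventually_mono) (use that in blast)
  qed (use that beh at_y in blast)+
  then show ?thesis
    using run_dec_cong run_eq_run_dec[OF tw] run_eq_run_dec[OF ty] by metis
qed

lemma stable_region:
  assumes sf: "is_subfield Q" and w: "w \<in> W" and WQ: "W \<subseteq> Qn Q n"
    and h: "is_direction Q n h" and into: "continues_into Q n W h w"
    and B: "finite B" "\<forall>v\<in>B. contQ n W v" and beh: "\<forall>v\<in>B. dir_behaviour Q n W h w v (s v)"
    and \<epsilon>: "\<epsilon> > 0"
  shows "\<exists>x0\<in>Qn Q n. eventually (\<lambda>y. y \<in> W \<and> distn n w y < \<epsilon> \<and>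
           (\<forall>v\<in>B. sgn (v y - v w) = s v \<and> (v w \<noteq> 0 \<longrightarrow> sgn (v y) = sgn (v w)))) (nbhds Q n x0)"
proof -
  have "eventually (\<lambda>y. \<forall>v\<in>B. v w \<noteq> 0 \<longrightarrow> y \<in> W \<longrightarrow> sgn (v y) = sgn (v w)) (nbhds Q n w)"
  proof (intro eventually_ball_finite B(1) ballI)
    fix v assume "v \<in> B"
    then show "eventually (\<lambda>y. v w \<noteq> 0 \<longrightarrow> y \<in> W \<longrightarrow> sgn (v y) = sgn (v w)) (nbhds Q n w)"
      using contQ_sgn_stable[OF _ w] B(2) by (cases "v w = 0") auto
  qed
  with eventually_nbhds_close[OF \<epsilon>]
  have near_w: "eventually (\<lambda>y. distn n w y < \<epsilon> \<and>
                  (\<forall>v\<in>B. v w \<noteq> 0 \<longrightarrow> y \<in> W \<longrightarrow> sgn (v y) = sgn (v w))) (nbhds Q n w)"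
    by (rule eventually_conj)
  have "eventually (\<lambda>a. \<forall>v\<in>B. eventually (\<lambda>y. y \<in> W \<and> sgn (v y - v w) = s v)
          (nbhds Q n (\<lambda>i. w i + h a i))) (at_right 0)"
    using beh B(1) by (intro eventually_ball_finite) (auto simp: dir_behaviour_iff)
  then have "eventually (\<lambda>a. eventually (\<lambda>y. y \<in> W \<and> distn n w y < \<epsilon> \<and>
           (\<forall>v\<in>B. sgn (v y - v w) = s v \<and> (v w \<noteq> 0 \<longrightarrow> sgn (v y) = sgn (v w))))
          (nbhds Q n (\<lambda>i. w i + h a i))) (at_right 0)"
    using into eventually_nbhds_shift[OF h near_w] unfolding continues_into_iff
  proof eventually_elim
    case (elim a)
    then have "eventually (\<lambda>y. \<forall>v\<in>B. y \<in> W \<and> sgn (v y - v w) = s v) (nbhds Q n (\<lambda>i. w i + h a i))"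
      using B(1) by (intro eventually_ball_finite) auto
    with elim(2,3) show ?case by eventually_elim auto
  qed
  then obtain a where "eventually (\<lambda>y. y \<in> W \<and> distn n w y < \<epsilon> \<and>
           (\<forall>v\<in>B. sgn (v y - v w) = s v \<and> (v w \<noteq> 0 \<longrightarrow> sgn (v y) = sgn (v w))))
          (nbhds Q n (\<lambda>i. w i + h a i))"
    using eventually_happens'[OF trivial_limit_at_right_real] by blast
  moreover have "(\<lambda>i. w i + h a i) \<in> Qn Q n" using shifted_point_in_Qn[OF sf _ h] w WQ by blast
  ultimately show ?thesis by blast
qed

lemma contQ_tendsto:
  assumes f: "contQ n W f" and w: "w \<in> W" and ys: "\<forall>k. ys k \<in> W"
    and lim: "(\<lambda>k. distn n w (ys k)) \<longlonglongrightarrow> 0"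
  shows "(\<lambda>k. f (ys k)) \<longlonglongrightarrow> f w"
  unfolding tendsto_iff dist_real_def
proof (intro allI impI)
  fix r :: real assume "r > 0"
  then obtain d where "d > 0" and d: "\<forall>y\<in>W. distn n w y < d \<longrightarrow> \<bar>f y - f w\<bar> < r"
    using f w unfolding contQ_def by blast
  have "eventually (\<lambda>k. distn n w (ys k) < d) sequentially"
    using order_tendstoD(2)[OF lim \<open>d > 0\<close>] .
  then show "eventually (\<lambda>k. \<bar>f (ys k) - f w\<bar> < r) sequentially"
    using d ys by (auto elim: eventually_mono)
qed

lemma tendsto_Min_finite:
  fixes f :: "'a \<Rightarrow> 'b \<Rightarrow> 'c::linorder_topology"
  assumes "finite L" "L \<noteq> {}" "\<forall>l\<in>L. ((\<lambda>x. f x l) \<longlongrightarrow> g l) F"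
  shows "((\<lambda>x. Min (f x ` L)) \<longlongrightarrow> Min (g ` L)) F"
  using assms by (induction L rule: finite_ne_induct) (auto intro!: tendsto_min)

context
  fixes Q :: "real set" and P :: "'l struct set" and T :: "'l struct \<Rightarrow> 'l dtree"
    and tb :: "'l struct \<Rightarrow> vec \<Rightarrow> bool list \<Rightarrow> bool" and C :: "('l struct \<times> vec) set"
  assumes sf: "is_subfield Q" and problem: "is_problem Q P" and algorithm: "is_algorithm Q P T"
    and perturbation: "uses_symbolic_perturbation Q P T tb" and null: "null_case Q P C"
begin

lemma structure_facts:
  assumes S: "S = (n, W, L, cost)" "S \<in> P"
  shows "W \<subseteq> Qn Q n" "finite L" "L \<noteq> {}" "\<forall>l\<in>L. contQ n W (\<lambda>w. cost w l)"
    "finite (branch_fns (T S))" "\<forall>v\<in>branch_fns (T S). contQ n W v"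
    "nowhere_open Q n {y \<in> W. (S, y) \<in> C}"
  using problem algorithm null S
  by (auto simp: is_problem_def valid_struct_def semi_open_def is_algorithm_def null_case_def
      finite_branch_fns)

lemma perturbation_at:
  assumes S: "S = (n, W, L, cost)" "S \<in> P" and x: "x \<in> W"
  obtains h s where "is_direction Q n h" "continues_into Q n W h x"
    "\<forall>v\<in>branch_fns (T S). dir_behaviour Q n W h x v (s v)"
    "ties_ok (tb S x) (\<lambda>v. dir_behaviour Q n W h x v (-1)) x [] (T S)"
proof -
  obtain h where "is_direction Q n h" "continues_into Q n W h x"
    "\<forall>v\<in>branch_fns (T S). \<exists>s. dir_behaviour Q n W h x v s"
    "ties_ok (tb S x) (\<lambda>v. dir_behaviour Q n W h x v (-1)) x [] (T S)"
    using perturbation S x unfolding uses_symbolic_perturbation_def by fastforce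
  then show ?thesis using that by metis
qed

text \<open>Every admissible w is approximated by instances outside the null case on which the
  algorithm returns the same output as on w: take y outside the null case in the stable region
  near w + h(a).\<close>

lemma output_approximable:
  assumes S: "S = (n, W, L, cost)" "S \<in> P" and w: "w \<in> W" and \<epsilon>: "\<epsilon> > 0"
  shows "\<exists>y\<in>W. (S, y) \<notin> C \<and> distn n w y < \<epsilon> \<and> alg_out T tb S y = alg_out T tb S w"
proof -
  note facts = structure_facts[OF S]
  obtain h s where h: "is_direction Q n h" "continues_into Q n W h w"
    and beh: "\<forall>v\<in>branch_fns (T S). dir_behaviour Q n W h w v (s v)"
    and tw: "ties_ok (tb S w) (\<lambda>v. dir_behaviour Q n W h w v (-1)) w [] (T S)"
    using perturbation_at[OF S w] by blast
  obtain x0 e where "x0 \<in> Qn Q n" "e > 0" and good: "\<forall>y\<in>nbhd Q n x0 e. y \<in> W \<and> distn n w y < \<epsilon> \<and>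
      (\<forall>v\<in>branch_fns (T S). sgn (v y - v w) = s v \<and> (v w \<noteq> 0 \<longrightarrow> sgn (v y) = sgn (v w)))"
    using stable_region[OF sf w facts(1) h facts(5,6) beh \<epsilon>] unfolding eventually_nbhds by blast
  then have "nbhd Q n x0 e \<noteq> {}" by (auto simp: nbhd_def)
  then have "\<not> nbhd Q n x0 e \<subseteq> {y \<in> W. (S, y) \<in> C}"
    using facts(7) openQ_nbhd[of Q n x0 e] unfolding nowhere_open_def
    by (meson exI[of _ "nbhd Q n x0 e"])
  moreover have "nbhd Q n x0 e \<subseteq> W" using good by blast
  ultimately obtain y where y: "y \<in> nbhd Q n x0 e" "(S, y) \<notin> C" by blast
  have at_y: "y \<in> W" "distn n w y < \<epsilon>"
    "\<forall>v\<in>branch_fns (T S). sgn (v y - v w) = s v \<and> (v w \<noteq> 0 \<longrightarrow> sgn (v y) = sgn (v w))"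
    using bspec[OF good y(1)] by blast+
  obtain hy where hy: "is_direction Q n hy"
    and ty: "ties_ok (tb S y) (\<lambda>v. dir_behaviour Q n W hy y v (-1)) y [] (T S)"
    using perturbation_at[OF S at_y(1)] by blast
  have near_y: "eventually (\<lambda>z. \<forall>v\<in>branch_fns (T S). sgn (v z - v w) = s v) (nbhds Q n y)"
    using eventually_in_nbhd[OF y(1)] by (rule eventually_mono) (use good in blast)
  have "w \<in> Qn Q n" "y \<in> Qn Q n" using w at_y(1) facts(1) by blast+
  from same_output[OF sf this h(1) hy tw ty beh at_y(3) near_y]
  have "alg_out T tb S y = alg_out T tb S w" by (simp add: alg_out_def)
  then show ?thesis using at_y(1,2) y(2) by blast
qed

lemma approximating_sequence:
  assumes S: "S = (n, W, L, cost)" "S \<in> P" and w: "w \<in> W"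
  shows "\<exists>ys. (\<forall>k. ys k \<in> W \<and> (S, ys k) \<notin> C \<and> alg_out T tb S (ys k) = alg_out T tb S w) \<and>
              (\<forall>f. contQ n W f \<longrightarrow> (\<lambda>k. f (ys k)) \<longlonglongrightarrow> f w)"
proof -
  have "\<forall>k. \<exists>y\<in>W. (S, y) \<notin> C \<and> distn n w y < inverse (real (Suc k)) \<and> alg_out T tb S y = alg_out T tb S w"
    using output_approximable[OF S w] by simp
  then obtain ys where ys: "\<forall>k. ys k \<in> W \<and> (S, ys k) \<notin> C \<and> distn n w (ys k) < inverse (real (Suc k))
                            \<and> alg_out T tb S (ys k) = alg_out T tb S w"
    by metis
  have close: "(\<lambda>k. distn n w (ys k)) \<longlonglongrightarrow> 0"
  proof (rule tendsto_sandwich[OF _ _ tendsto_const LIMSEQ_inverse_real_of_nat])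
    show "eventually (\<lambda>k. 0 \<le> distn n w (ys k)) sequentially" by (simp add: distn_def sum_nonneg)
    show "eventually (\<lambda>k. distn n w (ys k) \<le> inverse (real (Suc k))) sequentially"
      using ys by (simp add: less_imp_le)
  qed
  have "(\<lambda>k. f (ys k)) \<longlonglongrightarrow> f w" if "contQ n W f" for f
    using contQ_tendsto[OF that w _ close] ys by blast
  with ys show ?thesis by blast
qed

lemma output_along_sequence:
  assumes S: "S = (n, W, L, cost)" "S \<in> P" and w: "w \<in> W"
    and good: "\<forall>y\<in>W. (S, y) \<notin> C \<longrightarrow> (\<exists>l. alg_out T tb S y = Some l \<and> l \<in> L \<and> G y l)"
  shows "\<exists>l ys. alg_out T tb S w = Some l \<and> l \<in> L \<and> (\<forall>k. G (ys k) l) \<and>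
                (\<forall>f. contQ n W f \<longrightarrow> (\<lambda>k. f (ys k)) \<longlonglongrightarrow> f w)"
proof -
  obtain ys where ys: "\<forall>k. ys k \<in> W \<and> (S, ys k) \<notin> C \<and> alg_out T tb S (ys k) = alg_out T tb S w"
    and lim: "\<forall>f. contQ n W f \<longrightarrow> (\<lambda>k. f (ys k)) \<longlonglongrightarrow> f w"
    using approximating_sequence[OF S w] by blast
  have "\<forall>k. \<exists>l. alg_out T tb S w = Some l \<and> l \<in> L \<and> G (ys k) l"
    using good ys by metis
  then obtain l where "alg_out T tb S w = Some l" "l \<in> L" "\<forall>k. G (ys k) l"
    by (metis option.inject)
  with lim show ?thesis by blast
qed

lemma cost_and_OPT_tendsto:
  assumes S: "S = (n, W, L, cost)" "S \<in> P" and l: "l \<in> L"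
    and lim: "\<forall>f. contQ n W f \<longrightarrow> (\<lambda>k. f (ys k)) \<longlonglongrightarrow> f w"
  shows "(\<lambda>k. cost (ys k) l) \<longlonglongrightarrow> cost w l" "(\<lambda>k. OPT S (ys k)) \<longlonglongrightarrow> OPT S w"
proof -
  note L = structure_facts(2-4)[OF S]
  then have each: "\<forall>l\<in>L. (\<lambda>k. cost (ys k) l) \<longlonglongrightarrow> cost w l" using lim by blast
  then show "(\<lambda>k. cost (ys k) l) \<longlonglongrightarrow> cost w l" using l by blast
  show "(\<lambda>k. OPT S (ys k)) \<longlonglongrightarrow> OPT S w"
    using tendsto_Min_finite[OF L(1,2) each] by (simp add: S OPT_def)
qed

lemma optimality_extends:
  assumes S: "S = (n, W, L, cost)" "S \<in> P" and w: "w \<in> W"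
    and opt: "\<forall>y\<in>W. (S, y) \<notin> C \<longrightarrow> (\<exists>l. alg_out T tb S y = Some l \<and> l \<in> L \<and> cost y l = OPT S y)"
  shows "\<exists>l. alg_out T tb S w = Some l \<and> l \<in> L \<and> cost w l = OPT S w"
proof -
  obtain l ys where out: "alg_out T tb S w = Some l" "l \<in> L"
    and eq: "\<forall>k. cost (ys k) l = OPT S (ys k)" and lim: "\<forall>f. contQ n W f \<longrightarrow> (\<lambda>k. f (ys k)) \<longlonglongrightarrow> f w"
    using output_along_sequence[OF S w opt] by blast
  note limits = cost_and_OPT_tendsto[OF S out(2) lim]
  have "cost w l = OPT S w"
    using LIMSEQ_unique[OF limits(1)] limits(2) eq by simp
  with out show ?thesis by blast
qed

lemma approximation_extends:
  assumes S: "S = (n, W, L, cost)" "S \<in> P" and w: "w \<in> W" and c: "contQ n W c"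
    and apx: "\<forall>y\<in>W. (S, y) \<notin> C \<longrightarrow> (\<exists>l. alg_out T tb S y = Some l \<and> l \<in> L \<and> cost y l \<le> c y * OPT S y)"
  shows "\<exists>l. alg_out T tb S w = Some l \<and> l \<in> L \<and> cost w l \<le> c w * OPT S w"
proof -
  obtain l ys where out: "alg_out T tb S w = Some l" "l \<in> L"
    and le: "\<forall>k. cost (ys k) l \<le> c (ys k) * OPT S (ys k)"
    and lim: "\<forall>f. contQ n W f \<longrightarrow> (\<lambda>k. f (ys k)) \<longlonglongrightarrow> f w"
    using output_along_sequence[OF S w apx] by blast
  note limits = cost_and_OPT_tendsto[OF S out(2) lim]
  have "cost w l \<le> c w * OPT S w"
    using LIMSEQ_le[OF limits(1) tendsto_mult[OF lim[rule_format, OF c] limits(2)]] le by blast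
  with out show ?thesis by blast
qed

end

theorem corollary1:
  fixes Q :: "real set" and P :: "'l struct set"
    and T :: "'l struct \<Rightarrow> 'l dtree" and tb :: "'l struct \<Rightarrow> vec \<Rightarrow> bool list \<Rightarrow> bool"
    and C :: "('l struct \<times> vec) set"
  assumes "is_subfield Q"
    and "is_problem Q P"
    and "is_algorithm Q P T"
    and "uses_symbolic_perturbation Q P T tb"
    and "null_case Q P C"
  shows
    "((\<forall>S\<in>P. \<forall>w\<in>fst (snd S). (S, w) \<notin> C \<longrightarrow>
         (\<exists>l. alg_out T tb S w = Some l \<and> l \<in> fst (snd (snd S)) \<and> snd (snd (snd S)) w l = OPT S w))
      \<longrightarrow> (\<forall>S\<in>P. \<forall>w\<in>fst (snd S).
         (\<exists>l. alg_out T tb S w = Some l \<and> l \<in> fst (snd (snd S)) \<and> snd (snd (snd S)) w l = OPT S w)))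
     \<and>
     (\<forall>c :: 'l struct \<Rightarrow> vec \<Rightarrow> real.
        (\<forall>S\<in>P. contQ (fst S) (fst (snd S)) (c S)) \<longrightarrow>
        (\<forall>S\<in>P. \<forall>w\<in>fst (snd S). (S, w) \<notin> C \<longrightarrow>
           (\<exists>l. alg_out T tb S w = Some l \<and> l \<in> fst (snd (snd S)) \<and> snd (snd (snd S)) w l \<le> c S w * OPT S w))
        \<longrightarrow> (\<forall>S\<in>P. \<forall>w\<in>fst (snd S).
           (\<exists>l. alg_out T tb S w = Some l \<and> l \<in> fst (snd (snd S)) \<and> snd (snd (snd S)) w l \<le> c S w * OPT S w)))"
proof (intro conjI impI allI ballI)
  fix S w
  assume opt: "\<forall>S\<in>P. \<forall>w\<in>fst (snd S). (S, w) \<notin> C \<longrightarrow>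
         (\<exists>l. alg_out T tb S w = Some l \<and> l \<in> fst (snd (snd S)) \<and> snd (snd (snd S)) w l = OPT S w)"
    and "S \<in> P" "w \<in> fst (snd S)"
  obtain n W L cost where S: "S = (n, W, L, cost)" by (cases S)
  have "\<forall>y\<in>W. (S, y) \<notin> C \<longrightarrow> (\<exists>l. alg_out T tb S y = Some l \<and> l \<in> L \<and> cost y l = OPT S y)"
    using opt \<open>S \<in> P\<close> S by fastforce
  then show "\<exists>l. alg_out T tb S w = Some l \<and> l \<in> fst (snd (snd S)) \<and> snd (snd (snd S)) w l = OPT S w"
    using optimality_extends[OF assms S \<open>S \<in> P\<close>] \<open>w \<in> fst (snd S)\<close> S by simp
next
  fix c S w
  assume c: "\<forall>S\<in>P. contQ (fst S) (fst (snd S)) (c S)"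
    and apx: "\<forall>S\<in>P. \<forall>w\<in>fst (snd S). (S, w) \<notin> C \<longrightarrow>
           (\<exists>l. alg_out T tb S w = Some l \<and> l \<in> fst (snd (snd S)) \<and> snd (snd (snd S)) w l \<le> c S w * OPT S w)"
    and "S \<in> P" "w \<in> fst (snd S)"
  obtain n W L cost where S: "S = (n, W, L, cost)" by (cases S)
  have "contQ n W (c S)" using c \<open>S \<in> P\<close> S by fastforce
  moreover have "\<forall>y\<in>W. (S, y) \<notin> C \<longrightarrow> (\<exists>l. alg_out T tb S y = Some l \<and> l \<in> L \<and> cost y l \<le> c S y * OPT S y)"
    using apx \<open>S \<in> P\<close> S by fastforce
  ultimately show "\<exists>l. alg_out T tb S w = Some l \<and> l \<in> fst (snd (snd S)) \<and> snd (snd (snd S)) w l \<le> c S w * OPT S w"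
    using approximation_extends[OF assms S \<open>S \<in> P\<close>] \<open>w \<in> fst (snd S)\<close> S by simp
qed

end
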